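(* Let $\lambda$ be a nonzero real number and $\delta\in\mathbb{C}$ with $\mathrm{Re}(\delta)>0$. (i) For every $p\in\mathbb{N}$ and every real $x$ with $0<x<1/|\lambda|$, \[ \Big(\frac{d}{dx}x\Big)^{p}\big[x^{\delta-1}e_{\lambda}(x,\ \delta|p)\big]=x^{\delta-1}e_{\lambda}(x). \] (ii) For every complex $x$ with $|x|<1/|\lambda|$ and every $z\in\mathbb{C}$ with $|z|<|\delta|$, \[ \sum_{k=0}^{\infty}e_{\lambda}(x,\ \delta|k)z^{k}=e_{\lambda}(x)+z\,e_{\lambda}(x,\ \delta-z|1). \]
   Context: For nonzero real $\lambda$: $(1)_{0,\lambda}=1$, $(1)_{n,\lambda}=1(1-\lambda)\cdots(1-(n-1)\lambda)$ for $n\ge1$. $e_\lambda(x)=\sum_{n\ge0}(1)_{n,\lambda}x^n/n!$ $(=(1+\lambda x)^{1/\lambda}$ for real $x$ with $|\lambda x|<1)$. For $k\in\mathbb{N}\cup\{0\}$ and $\delta$ with $n+\delta\neq0$ for all $n\ge0$, $e_{\lambda}(x,\ \delta|k)=\sum_{n=0}^{\infty}\frac{(1)_{n,\lambda}}{n!\,(n+\delta)^{k}}x^{n}$ (in (ii), $e_\lambda(x,\delta-z|1)=\sum_{n\ge0}\frac{(1)_{n,\lambda}x^n}{n!(n+\delta-z)}$). The operator $\frac{d}{dx}x$ sends $f(x)$ to $\frac{d}{dx}\big(xf(x)\big)$, and $(\frac{d}{dx}x)^p$ is its $p$-fold iterate. For $x>0$, $x^{\delta-1}=\exp((\delta-1)\log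 x)$. *)

theory Defs
  imports "HOL-Analysis.Analysis"
begin

definition lam_fall :: "real \<Rightarrow> nat \<Rightarrow> real" where
  "lam_fall lam n = (\<Prod>i<n. 1 - of_nat i * lam)"

definition e_lam :: "real \<Rightarrow> complex \<Rightarrow> complex" where
  "e_lam lam x = (\<Sum>n. complex_of_real (lam_fall lam n) * x ^ n / of_nat (fact n))"

definition e_lam_poly :: "real \<Rightarrow> complex \<Rightarrow> complex \<Rightarrow> nat \<Rightarrow> complex" where
  "e_lam_poly lam x \<delta> k =
     (\<Sum>n. complex_of_real (lam_fall lam n) * x ^ n / (of_nat (fact n) * (of_nat n + \<delta>) ^ k))"

definition dx_x :: "(real \<Rightarrow> complex) \<Rightarrow> (real \<Rightarrow> complex)" where
  "dx_x f = (\<lambda>x. vector_derivative (\<lambda>t. complex_of_real t * f t) (at x))"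

definition cpow_real :: "real \<Rightarrow> complex \<Rightarrow> complex" where
  "cpow_real x a = exp (a * complex_of_real (ln x))"

end

theory Submission
  imports Defs
begin

text \<open>
  Write \<open>a n = (1)_{n,\<lambda>} / n!\<close>. Then \<open>x^\<delta> e_\<lambda>(x, \<delta>|k) = \<Sum>n. a n x^(n+\<delta>) / (n+\<delta>)^k\<close>,
  whose termwise derivative is \<open>x^(\<delta>-1) e_\<lambda>(x, \<delta>|k-1)\<close>. Since
  \<open>(d/dx x) (x^(\<delta>-1) f) = (d/dx) (x^\<delta> f)\<close>, every application of the operator lowers \<open>k\<close>
  by one, and \<open>e_\<lambda>(x, \<delta>|0) = e_\<lambda>(x)\<close>; this is (i).
  For (ii), expand \<open>e_\<lambda>(x, \<delta>|k) z^k\<close> and sum over \<open>k\<close> first: the geometric series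
  \<open>\<Sum>k. (z / (n+\<delta>))^k = 1 + z / (n+\<delta>-z)\<close> gives the right-hand side. The interchange of
  the two summations is legitimate because \<open>|z / (n+\<delta>)| \<le> |z| / |\<delta>| < 1\<close> uniformly in \<open>n\<close>,
  so the double series converges absolutely.
\<close>

lemma lam_fall_Suc: "lam_fall lam (Suc n) = lam_fall lam n * (1 - of_nat n * lam)"
  unfolding lam_fall_def by (simp add: lessThan_Suc mult.commute)

lemma summable_abs_lam_fall_power:
  assumes r: "0 \<le> r" "r * \<bar>lam\<bar> < 1"
  shows "summable (\<lambda>n. \<bar>lam_fall lam n\<bar> / fact n * r ^ n)"
proof -
  \<comment> \<open>consecutive terms have ratio \<open>|1 - n lam| r / (n+1)\<close>, which tends to \<open>r |lam| < 1\<close>\<close>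
  define c where "c = (1 + r * \<bar>lam\<bar>) / 2"
  obtain N :: nat where N: "2 * r / (1 - r * \<bar>lam\<bar>) \<le> N"
    using real_arch_simple by blast
  show ?thesis
  proof (rule summable_ratio_test[of c N])
    show "c < 1" using r by (simp add: c_def)
    fix n assume "N \<le> n"
    with N have "2 * r / (1 - r * \<bar>lam\<bar>) \<le> n"
      by (meson of_nat_le_iff order_trans)
    with r have "2 * r \<le> n - n * (r * \<bar>lam\<bar>)"
      by (simp add: pos_divide_le_eq algebra_simps)
    moreover have "\<bar>1 - n * lam\<bar> * r \<le> r + n * (r * \<bar>lam\<bar>)"
      using r abs_triangle_ineq4[of 1 "n * lam"] mult_right_mono[of _ _ r]
      by (fastforce simp: abs_mult algebra_simps)
    moreover have "(1 + r * \<bar>lam\<bar>) * (n + 1) = 1 + r * \<bar>lam\<bar> + n + n * (r * \<bar>lam\<bar>)"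
      by (simp add: algebra_simps)
    ultimately have "2 * (\<bar>1 - n * lam\<bar> * r) \<le> (1 + r * \<bar>lam\<bar>) * (n + 1)"
      using mult_nonneg_nonneg[OF r(1) abs_ge_zero[of lam]] by linarith
    then have ratio: "\<bar>1 - n * lam\<bar> * r / (n + 1) \<le> c"
      by (simp add: c_def field_simps)
    have "\<bar>lam_fall lam (Suc n)\<bar> / fact (Suc n) * r ^ Suc n
        = (\<bar>lam_fall lam n\<bar> / fact n * r ^ n) * (\<bar>1 - n * lam\<bar> * r / (n + 1))"
      by (simp add: lam_fall_Suc abs_mult divide_simps)
    also have "\<dots> \<le> (\<bar>lam_fall lam n\<bar> / fact n * r ^ n) * c"
      using r by (intro mult_left_mono ratio) auto
    finally show "norm (\<bar>lam_fall lam (Suc n)\<bar> / fact (Suc n) * r ^ Suc n)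
        \<le> c * norm (\<bar>lam_fall lam n\<bar> / fact n * r ^ n)"
      using r by (simp add: mult.commute)
  qed
qed

lemma norm_le_norm_of_nat_add:
  fixes \<delta> :: complex
  assumes "0 \<le> Re \<delta>"
  shows "norm \<delta> \<le> norm (of_nat n + \<delta>)"
proof -
  have "(Re \<delta>)\<^sup>2 \<le> (real n + Re \<delta>)\<^sup>2"
    using assms by (intro power_mono) auto
  then show ?thesis
    unfolding cmod_def by (intro real_sqrt_le_mono) simp
qed

lemma summable_norm_lam_fall_series:
  fixes x :: complex
  assumes x: "norm x * \<bar>lam\<bar> < 1" and w: "\<And>n. norm (w n) \<le> M"
  shows "summable (\<lambda>n. norm (of_real (lam_fall lam n) * x ^ n / of_nat (fact n) * w n))"
proof (rule summable_comparison_test')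
  show "summable (\<lambda>n. M * (\<bar>lam_fall lam n\<bar> / fact n * norm x ^ n))"
    using summable_abs_lam_fall_power[OF norm_ge_zero x] by (rule summable_mult)
  fix n
  have "norm (w n) * (\<bar>lam_fall lam n\<bar> / fact n * norm x ^ n)
      \<le> M * (\<bar>lam_fall lam n\<bar> / fact n * norm x ^ n)"
    using w by (intro mult_right_mono) auto
  then show "norm (norm (of_real (lam_fall lam n) * x ^ n / of_nat (fact n) * w n))
      \<le> M * (\<bar>lam_fall lam n\<bar> / fact n * norm x ^ n)"
    by (simp add: norm_mult norm_divide norm_power mult_ac)
qed

definition e_lam_coeff :: "real \<Rightarrow> complex \<Rightarrow> nat \<Rightarrow> nat \<Rightarrow> complex" where
  "e_lam_coeff lam \<delta> k n = of_real (lam_fall lam n) / (of_nat (fact n) * (of_nat n + \<delta>) ^ k)"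

lemma e_lam_poly_power_series: "e_lam_poly lam x \<delta> k = (\<Sum>n. e_lam_coeff lam \<delta> k n * x ^ n)"
  unfolding e_lam_poly_def e_lam_coeff_def by simp

lemma e_lam_poly_0: "e_lam_poly lam x \<delta> 0 = e_lam lam x"
  unfolding e_lam_poly_def e_lam_def by simp

lemma of_nat_add_mult_e_lam_coeff_Suc:
  assumes "of_nat n + \<delta> \<noteq> 0"
  shows "(of_nat n + \<delta>) * e_lam_coeff lam \<delta> (Suc k) n = e_lam_coeff lam \<delta> k n"
  using assms by (simp add: e_lam_coeff_def divide_simps)

lemma summable_e_lam_coeff:
  assumes \<delta>: "0 < Re \<delta>" and x: "norm x * \<bar>lam\<bar> < 1"
  shows "summable (\<lambda>n. e_lam_coeff lam \<delta> k n * x ^ n)"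
proof -
  have "0 < norm \<delta>"
    using \<delta> by auto
  have "norm (1 / (of_nat n + \<delta>) ^ k) \<le> 1 / norm \<delta> ^ k" for n
  proof -
    have "norm \<delta> \<le> norm (of_nat n + \<delta>)"
      using norm_le_norm_of_nat_add \<delta> by simp
    then show ?thesis
      using \<open>0 < norm \<delta>\<close> unfolding norm_divide norm_power norm_one
      by (intro divide_left_mono power_mono mult_pos_pos zero_less_power) auto
  qed
  from summable_norm_cancel[OF summable_norm_lam_fall_series[OF x this]]
  show ?thesis
    by (simp add: e_lam_coeff_def)
qed

lemma sums_suminf_mult_geometric:
  fixes b q :: "nat \<Rightarrow> 'a::{real_normed_field,banach}"
  assumes b: "summable (\<lambda>n. norm (b n))" and q: "\<And>n. norm (q n) \<le> \<rho>" "\<rho> < 1"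
  shows "(\<lambda>k. \<Sum>n. b n * q n ^ k) sums (\<Sum>n. b n / (1 - q n))"
proof -
  define F where "F = (\<lambda>(n, k). b n * q n ^ k)"
  have q1: "norm (q n) < 1" for n
    using q le_less_trans by blast
  have row: "((\<lambda>k. F (n, k)) has_sum b n / (1 - q n)) UNIV" for n
  proof (rule norm_summable_imp_has_sum)
    show "summable (\<lambda>k. norm (F (n, k)))"
      using summable_mult[OF summable_geometric[of "norm (q n)"], of "norm (b n)"] q1[of n]
      by (simp add: F_def norm_mult norm_power)
    show "(\<lambda>k. F (n, k)) sums (b n / (1 - q n))"
      using sums_mult[OF geometric_sums[OF q1[of n]], of "b n"] by (simp add: F_def)
  qed
  have col: "((\<lambda>n. F (n, k)) has_sum (\<Sum>n. b n * q n ^ k)) UNIV" for k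
  proof (rule norm_summable_imp_has_sum)
    have "norm (F (n, k)) \<le> norm (b n)" for n
      using q1[of n] by (simp add: F_def norm_mult norm_power mult_left_le power_le_one)
    then show summable: "summable (\<lambda>n. norm (F (n, k)))"
      by (intro summable_comparison_test'[OF b]) simp
    show "(\<lambda>n. F (n, k)) sums (\<Sum>n. b n * q n ^ k)"
      using summable_sums[OF summable_norm_cancel[OF summable]] by (simp add: F_def)
  qed
  have row_norm: "((\<lambda>k. norm (F (n, k))) has_sum norm (b n) / (1 - norm (q n))) UNIV" for n
  proof (rule sums_nonneg_imp_has_sum)
    show "(\<lambda>k. norm (F (n, k))) sums (norm (b n) / (1 - norm (q n)))"
      using sums_mult[OF geometric_sums[of "norm (q n)"], of "norm (b n)"] q1[of n]
      by (simp add: F_def norm_mult norm_power)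
  qed simp
  have "(\<lambda>n. norm (b n) / (1 - \<rho>)) summable_on UNIV"
    using b q(2) by (intro norm_summable_imp_summable_on) (simp add: summable_divide)
  then have "(\<lambda>n. norm (infsum (\<lambda>k. norm (F (n, k))) UNIV)) summable_on UNIV"
  proof (rule summable_on_comparison_test)
    fix n
    have "norm (b n) / (1 - norm (q n)) \<le> norm (b n) / (1 - \<rho>)"
      using q q1[of n] by (intro divide_left_mono mult_pos_pos) auto
    then show "norm (infsum (\<lambda>k. norm (F (n, k))) UNIV) \<le> norm (b n) / (1 - \<rho>)"
      using infsumI[OF row_norm[of n]] q1[of n] by simp
  qed simp
  then have "(\<lambda>p. norm (F p)) summable_on UNIV \<times> UNIV"
    using row_norm by (subst Infinite_Sum.abs_summable_on_Sigma_iff) (auto intro: has_sum_imp_summable)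
  then obtain S where S: "(F has_sum S) (UNIV \<times> UNIV)"
    using abs_summable_summable summable_on_def by blast
  have "((\<lambda>n. b n / (1 - q n)) has_sum S) UNIV"
    by (rule has_sum_SigmaD[OF S]) (use row in auto)
  then have "S = (\<Sum>n. b n / (1 - q n))"
    by (intro sums_unique has_sum_imp_sums)
  moreover have "((\<lambda>k. \<Sum>n. b n * q n ^ k) has_sum S) UNIV"
    by (rule has_sum_SigmaD[OF has_sum_swap[THEN iffD1, OF S]]) (use col in auto)
  ultimately show ?thesis
    by (simp add: has_sum_imp_sums)
qed

lemma suminf_e_lam_poly_mult_power:
  fixes x z \<delta> :: complex
  assumes \<delta>: "0 < Re \<delta>" and x: "norm x * \<bar>lam\<bar> < 1" and z: "norm z < norm \<delta>"
  shows "(\<Sum>k. e_lam_poly lam x \<delta> k * z ^ k) = e_lam lam x + z * e_lam_poly lam x (\<delta> - z) 1"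
proof -
  define b where "b n = of_real (lam_fall lam n) * x ^ n / of_nat (fact n)" for n
  define q where "q n = z / (of_nat n + \<delta>)" for n
  have \<delta>n: "norm \<delta> \<le> norm (of_nat n + \<delta>)" for n
    using norm_le_norm_of_nat_add \<delta> by simp
  have \<delta>zn: "norm \<delta> - norm z \<le> norm (of_nat n + \<delta> - z)" for n
    using \<delta>n[of n] norm_triangle_ineq2[of "of_nat n + \<delta>" z] by linarith
  have nz: "of_nat n + \<delta> \<noteq> 0" "of_nat n + \<delta> - z \<noteq> 0" for n
    using \<delta>n[of n] \<delta>zn[of n] z by auto
  have b: "summable (\<lambda>n. norm (b n * w n))" if "\<And>n. norm (w n) \<le> M" for w M
    unfolding b_def using summable_norm_lam_fall_series[OF x that] .
  have geometric: "(\<lambda>k. \<Sum>n. b n * q n ^ k) sums (\<Sum>n. b n / (1 - q n))"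
  proof (rule sums_suminf_mult_geometric)
    show "summable (\<lambda>n. norm (b n))"
      using b[of "\<lambda>_. 1" 1] by simp
    show "norm (q n) \<le> norm z / norm \<delta>" for n
      unfolding q_def norm_divide using \<delta>n[of n] z
      by (intro divide_left_mono mult_pos_pos) auto
    show "norm z / norm \<delta> < 1"
      using z norm_ge_zero[of z] by (simp add: divide_less_eq_1)
  qed
  have terms: "e_lam_poly lam x \<delta> k * z ^ k = (\<Sum>n. b n * q n ^ k)" for k
  proof -
    have "e_lam_poly lam x \<delta> k * z ^ k = (\<Sum>n. e_lam_coeff lam \<delta> k n * x ^ n * z ^ k)"
      unfolding e_lam_poly_power_series by (rule suminf_mult2[OF summable_e_lam_coeff[OF \<delta> x]])
    also have "\<dots> = (\<Sum>n. b n * q n ^ k)"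
      by (simp add: e_lam_coeff_def b_def q_def power_divide)
    finally show ?thesis .
  qed
  have split: "(\<lambda>n. b n / (1 - q n)) = (\<lambda>n. b n + z * (b n / (of_nat n + \<delta> - z)))"
    unfolding q_def using nz by (simp add: field_simps)
  have sb: "summable b"
    using summable_norm_cancel[OF b[of "\<lambda>_. 1" 1]] by simp
  have sbz: "summable (\<lambda>n. b n / (of_nat n + \<delta> - z))"
  proof -
    have "norm (1 / (of_nat n + \<delta> - z)) \<le> 1 / (norm \<delta> - norm z)" for n
      using \<delta>zn[of n] z unfolding norm_divide norm_one
      by (intro divide_left_mono mult_pos_pos) auto
    from summable_norm_cancel[OF b[OF this]] show ?thesis
      by simp
  qed
  have "(\<Sum>n. b n / (1 - q n)) = suminf b + z * (\<Sum>n. b n / (of_nat n + \<delta> - z))"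
    unfolding split suminf_add[OF sb summable_mult[OF sbz], symmetric] suminf_mult[OF sbz] ..
  then have "(\<Sum>k. e_lam_poly lam x \<delta> k * z ^ k) = suminf b + z * (\<Sum>n. b n / (of_nat n + \<delta> - z))"
    using geometric by (simp add: terms sums_iff)
  also have "suminf b = e_lam lam x"
    unfolding e_lam_def b_def ..
  also have "(\<Sum>n. b n / (of_nat n + \<delta> - z)) = e_lam_poly lam x (\<delta> - z) 1"
    unfolding e_lam_poly_def b_def by (simp add: algebra_simps)
  finally show ?thesis .
qed

lemma cpow_real_eq_mult:
  assumes "0 < t"
  shows "cpow_real t a = of_real t * cpow_real t (a - 1)"
proof -
  have "cpow_real t a = exp ((a - 1) * of_real (ln t) + of_real (ln t))"
    unfolding cpow_real_def by (simp add: algebra_simps)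
  also have "\<dots> = of_real t * cpow_real t (a - 1)"
    unfolding exp_add cpow_real_def using assms by (simp add: exp_of_real)
  finally show ?thesis .
qed

lemma has_vector_derivative_cpow_real:
  assumes "0 < t"
  shows "((\<lambda>s. cpow_real s a) has_vector_derivative a * cpow_real t (a - 1)) (at t)"
proof -
  have "((\<lambda>s. of_real (ln s) :: complex) has_vector_derivative of_real (inverse t)) (at t)"
    by (rule has_vector_derivative_of_real[OF DERIV_ln[OF assms]])
  moreover have "((\<lambda>u. exp (a * u)) has_field_derivative a * exp (a * of_real (ln t))) (at (of_real (ln t)))"
    by (auto intro!: derivative_eq_intros)
  ultimately have "((\<lambda>s. cpow_real s a) has_vector_derivative of_real (inverse t) * (a * cpow_real t a)) (at t)"
    using field_vector_diff_chain_at by (fastforce simp: comp_def cpow_real_def)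
  then show ?thesis
    using assms unfolding cpow_real_eq_mult[OF assms, of a] by (simp add: field_simps)
qed

lemma suminf_of_nat_add_mult_power:
  fixes c :: "nat \<Rightarrow> 'a::real_normed_field"
  assumes diffs: "summable (\<lambda>n. diffs c n * w ^ n)" and c: "summable (\<lambda>n. c n * w ^ n)"
  shows "w * (\<Sum>n. diffs c n * w ^ n) + a * (\<Sum>n. c n * w ^ n) = (\<Sum>n. (of_nat n + a) * c n * w ^ n)"
proof -
  have shift: "w * (of_nat n * c n * w ^ (n - Suc 0)) = of_nat n * c n * w ^ n" for n
    by (cases n) simp_all
  have "(\<lambda>n. of_nat n * c n * w ^ n) sums (w * (\<Sum>n. diffs c n * w ^ n))"
    using sums_mult[OF diffs_equiv[OF diffs], of w] unfolding shift .
  from sums_add[OF this sums_mult[OF summable_sums[OF c], of a]]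
  have "(\<lambda>n. (of_nat n + a) * c n * w ^ n) sums (w * (\<Sum>n. diffs c n * w ^ n) + a * (\<Sum>n. c n * w ^ n))"
    by (simp add: algebra_simps)
  then show ?thesis
    by (rule sums_unique)
qed

lemma has_vector_derivative_cpow_real_mult_power_series:
  fixes c :: "nat \<Rightarrow> complex"
  assumes conv: "\<And>w. norm w < K \<Longrightarrow> summable (\<lambda>n. c n * w ^ n)" and t: "0 < t" "t < K"
  shows "((\<lambda>s. cpow_real s a * (\<Sum>n. c n * of_real s ^ n)) has_vector_derivative
           cpow_real t (a - 1) * (\<Sum>n. (of_nat n + a) * c n * of_real t ^ n)) (at t)"
proof -
  have tK: "norm (of_real t :: complex) < K"
    using t by simp
  have "((\<lambda>s. \<Sum>n. c n * of_real s ^ n) has_vector_derivative (\<Sum>n. diffs c n * of_real t ^ n)) (at t)"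
    by (rule has_vector_derivative_real_field[OF termdiffs_strong'[OF conv tK]])
  from has_vector_derivative_mult[OF has_vector_derivative_cpow_real[OF t(1)] this]
  have deriv: "((\<lambda>s. cpow_real s a * (\<Sum>n. c n * of_real s ^ n)) has_vector_derivative
      cpow_real t a * (\<Sum>n. diffs c n * of_real t ^ n) + a * cpow_real t (a - 1) * (\<Sum>n. c n * of_real t ^ n)) (at t)" .
  have "cpow_real t a * (\<Sum>n. diffs c n * of_real t ^ n) + a * cpow_real t (a - 1) * (\<Sum>n. c n * of_real t ^ n)
      = cpow_real t (a - 1) * (of_real t * (\<Sum>n. diffs c n * of_real t ^ n) + a * (\<Sum>n. c n * of_real t ^ n))"
    unfolding cpow_real_eq_mult[OF t(1), of a] by (simp add: algebra_simps)
  also have "\<dots> = cpow_real t (a - 1) * (\<Sum>n. (of_nat n + a) * c n * of_real t ^ n)"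
    using suminf_of_nat_add_mult_power[OF termdiff_converges[OF tK conv] conv[OF tK]] by simp
  finally show ?thesis
    using deriv by simp
qed

lemma dx_x_cpow_real_e_lam_poly_Suc:
  assumes \<delta>: "0 < Re \<delta>" and lam: "lam \<noteq> 0" and t: "0 < t" "t < 1 / \<bar>lam\<bar>"
  shows "dx_x (\<lambda>s. cpow_real s (\<delta> - 1) * e_lam_poly lam (of_real s) \<delta> (Suc k)) t
           = cpow_real t (\<delta> - 1) * e_lam_poly lam (of_real t) \<delta> k"
proof -
  have conv: "summable (\<lambda>n. e_lam_coeff lam \<delta> j n * w ^ n)" if "norm w < 1 / \<bar>lam\<bar>" for w j
    using summable_e_lam_coeff[OF \<delta>] that lam by (simp add: field_simps)
  have "of_nat n + \<delta> \<noteq> 0" for n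
    using \<delta> by (auto simp: complex_eq_iff)
  then have shift: "(of_nat n + \<delta>) * e_lam_coeff lam \<delta> (Suc k) n = e_lam_coeff lam \<delta> k n" for n
    by (rule of_nat_add_mult_e_lam_coeff_Suc)
  have "((\<lambda>s. cpow_real s \<delta> * e_lam_poly lam (of_real s) \<delta> (Suc k)) has_vector_derivative
      cpow_real t (\<delta> - 1) * e_lam_poly lam (of_real t) \<delta> k) (at t)"
    unfolding e_lam_poly_power_series
    using has_vector_derivative_cpow_real_mult_power_series[OF conv[of _ "Suc k"] t, of \<delta>]
    unfolding shift .
  then have "((\<lambda>s. of_real s * (cpow_real s (\<delta> - 1) * e_lam_poly lam (of_real s) \<delta> (Suc k)))
      has_vector_derivative cpow_real t (\<delta> - 1) * e_lam_poly lam (of_real t) \<delta> k) (at t)"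
    by (rule has_vector_derivative_transform_within_open[where S = "{0<..}"])
      (use t cpow_real_eq_mult[of _ \<delta>] in auto)
  then show ?thesis
    unfolding dx_x_def by (rule vector_derivative_at)
qed

lemma dx_x_cong_open:
  assumes "open S" "t \<in> S" "\<And>s. s \<in> S \<Longrightarrow> f s = g s"
  shows "dx_x f t = dx_x g t"
  unfolding dx_x_def
  by (rule vector_derivative_cong_eq) (use assms in \<open>auto simp: eventually_nhds\<close>)

lemma funpow_dx_x_telescope:
  assumes "open S" and step: "\<And>k t. t \<in> S \<Longrightarrow> dx_x (F (Suc k)) t = F k t"
  shows "t \<in> S \<Longrightarrow> (dx_x ^^ j) (F (k + j)) t = F k t"
proof (induction j arbitrary: k t)
  case 0
  then show ?case by simp
next
  case (Suc j)
  have "(dx_x ^^ Suc j) (F (k + Suc j)) t = dx_x ((dx_x ^^ j) (F (Suc k + j))) t"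
    by simp
  also have "\<dots> = dx_x (F (Suc k)) t"
    by (rule dx_x_cong_open[OF assms(1) Suc.prems Suc.IH])
  also have "\<dots> = F k t"
    by (rule step[OF Suc.prems])
  finally show ?case .
qed

theorem theorem3:
  fixes lam :: real and \<delta> :: complex
  assumes "lam \<noteq> 0" and "Re \<delta> > 0"
  shows "(\<forall>(p::nat) (x::real). p \<ge> 1 \<longrightarrow> 0 < x \<longrightarrow> x < 1 / \<bar>lam\<bar> \<longrightarrow>
            (dx_x ^^ p) (\<lambda>t. cpow_real t (\<delta> - 1) * e_lam_poly lam (complex_of_real t) \<delta> p) x
              = cpow_real x (\<delta> - 1) * e_lam lam (complex_of_real x))
       \<and> (\<forall>(x::complex) (z::complex). norm x < 1 / \<bar>lam\<bar> \<longrightarrow> norm z < norm \<delta> \<longrightarrow>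
            (\<Sum>k. e_lam_poly lam x \<delta> k * z ^ k) = e_lam lam x + z * e_lam_poly lam x (\<delta> - z) 1)"
proof (intro conjI allI impI)
  fix p :: nat and x :: real
  assume "0 < x" "x < 1 / \<bar>lam\<bar>"
  then have "(dx_x ^^ p) (\<lambda>t. cpow_real t (\<delta> - 1) * e_lam_poly lam (of_real t) \<delta> (0 + p)) x
      = cpow_real x (\<delta> - 1) * e_lam_poly lam (of_real x) \<delta> 0"
    using assms dx_x_cpow_real_e_lam_poly_Suc
    by (intro funpow_dx_x_telescope[where S = "{0<..<1 / \<bar>lam\<bar>}"]) auto
  then show "(dx_x ^^ p) (\<lambda>t. cpow_real t (\<delta> - 1) * e_lam_poly lam (complex_of_real t) \<delta> p) x
      = cpow_real x (\<delta> - 1) * e_lam lam (complex_of_real x)"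
    by (simp add: e_lam_poly_0)
next
  fix x z :: complex
  assume "norm x < 1 / \<bar>lam\<bar>" "norm z < norm \<delta>"
  then show "(\<Sum>k. e_lam_poly lam x \<delta> k * z ^ k) = e_lam lam x + z * e_lam_poly lam x (\<delta> - z) 1"
    using assms suminf_e_lam_poly_mult_power by (simp add: field_simps)
qed

end
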